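(* Let $F$ be an algebraically closed field of characteristic $\neq 2$, let $R=F[t]$ with the involution ${}^*$ described in the context, and let $A\in M_2(R)$ satisfy $A^*=A$, $\det(A)\neq 0$ and $\gcd(A)=1$. Then $A$ is congruent to the diagonal matrix $\mathrm{diag}(1,\det(A))$, i.e. there is $S\in \mathrm{GL}_2(R)$ with $S^*AS=\mathrm{diag}(1,\det(A))$.
   Context: $R=F[t]$ is the polynomial ring over $F$, and ${}^*$ is the $F$-algebra involution of $R$ that is the identity on $F$ and sends $t$ to $-t$. For $A=(a_{ij})\in M_n(R)$, $A^*$ is the matrix whose $(i,j)$ entry is $a_{ji}^*$. $A$ is hermitian if $A^*=A$ and skew-hermitian if $A^*=-A$. Two such matrices $A,B$ are congruent if $B=S^*AS$ for some $S\in\mathrm{GL}_n(R)$. For a hermitian or skew-hermitian $A$, $\gcd(A)$ denotes the monic generator (or $0$) of the ideal of $R$ generated by all entries of $A$. *)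

theory Defs
  imports "HOL-Analysis.Analysis" "HOL-Computational_Algebra.Polynomial_Factorial"
begin

text \<open>The involution on F[t]: identity on F, t goes to -t.\<close>
definition pinv :: "'a::comm_ring_1 poly \<Rightarrow> 'a poly" where
  "pinv p = p \<circ>\<^sub>p [:0, -1:]"

definition cstar :: "'a::comm_ring_1 poly ^'n^'n \<Rightarrow> 'a poly ^'n^'n" where
  "cstar A = (\<chi> i j. pinv (A $ j $ i))"

text \<open>gcd(A) = 1: the monic generator of the ideal generated by all entries
  of A is 1, i.e. that ideal is the whole ring (1 is an R-linear combination
  of the entries).\<close>
definition gcd_mat_one :: "'a::comm_ring_1 poly ^'n^'n \<Rightarrow> bool" where
  "gcd_mat_one A \<longleftrightarrow> (\<exists>c :: 'n \<Rightarrow> 'n \<Rightarrow> 'a poly.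
      (\<Sum>i\<in>UNIV. \<Sum>j\<in>UNIV. c i j * A $ i $ j) = 1)"

end

theory Submission
  imports Defs
begin

text \<open>
  Over an algebraically closed field every polynomial fixed by the involution is a norm \<open>h h\<^sup>*\<close>.
  If \<open>a = A\<^sub>1\<^sub>1 \<noteq> 0\<close>, write \<open>-det A = h h\<^sup>*\<close>; then \<open>(h - A\<^sub>1\<^sub>2, a)\<close> is isotropic,
  and after dividing out a common factor it is the first column of a matrix of determinant 1,
  so we may assume \<open>A\<^sub>1\<^sub>1 = 0\<close>. The form is then \<open>b x\<^sup>* y + (b x\<^sup>* y)\<^sup>* + d y y\<^sup>*\<close>
  with \<open>b \<noteq> 0\<close> and \<open>(b, b\<^sup>*, d) = (1)\<close>. Let \<open>g\<close> generate \<open>(b, b\<^sup>*)\<close> and write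
  \<open>d = h h\<^sup>*\<close>. Choosing \<open>y\<close> as an inverse of \<open>h\<close> modulo \<open>g g\<^sup>*\<close>, generic within its
  residue class, makes \<open>1 - d y y\<^sup>*\<close> a fixed element of the ideal \<open>(b y, (b y)\<^sup>*)\<close>,
  hence a trace \<open>b y x\<^sup>* + (b y x\<^sup>*)\<^sup>*\<close>: the form represents 1. Finally a vector \<open>v\<close>
  with \<open>v\<^sup>* A v = 1\<close> is the first column of some \<open>S\<close> with \<open>det S = 1\<close> whose second column
  is \<open>A\<close>-orthogonal to \<open>v\<close>, and then \<open>S\<^sup>* A S = diag(1, det A)\<close>.
\<close>

section \<open>Bezout identities in Euclidean rings\<close>

lemma ex_common_divisor_in_ideal:
  fixes a b :: "'a::euclidean_ring"
  obtains g u w where "g = u * a + w * b" "g dvd a" "g dvd b"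
proof -
  have "\<exists>u w. (u * a + w * b) dvd a \<and> (u * a + w * b) dvd b" for a b :: 'a
  proof (induction "euclidean_size b" arbitrary: a b rule: less_induct)
    case less
    show ?case
    proof (cases "b = 0")
      case True
      then show ?thesis
        by (intro exI [of _ 1] exI [of _ 0]) simp
    next
      case False
      then obtain u w where uw: "(u * b + w * (a mod b)) dvd b" "(u * b + w * (a mod b)) dvd a mod b"
        using less mod_size_less by blast
      have "u * b + w * (a mod b) = w * a + (u - w * (a div b)) * b"
        by (simp add: minus_div_mult_eq_mod [symmetric] algebra_simps)
      moreover have "(u * b + w * (a mod b)) dvd a"
        using uw by (metis div_mult_mod_eq dvd_add dvd_mult)
      ultimately show ?thesis
        using uw by metis
    qed
  qed
  then show ?thesis
    using that by blast
qed

lemma coprime_imp_bezout: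
  fixes a b :: "'a::euclidean_ring"
  assumes "coprime a b"
  obtains u w where "u * a + w * b = 1"
proof -
  obtain g u w where g: "g = u * a + w * b" "g dvd a" "g dvd b"
    by (rule ex_common_divisor_in_ideal)
  then obtain k where "1 = g * k"
    using assms coprime_common_divisor by (metis dvdE)
  then have "(k * u) * a + (k * w) * b = 1"
    by (simp add: g(1) algebra_simps)
  then show ?thesis
    using that by blast
qed

lemma ex_common_divisor_coprime_quotients:
  fixes a b :: "'a::euclidean_ring"
  assumes "b \<noteq> 0"
  obtains g x y u w where "a = g * x" "b = g * y" "g \<noteq> 0" "u * x + w * y = 1"
proof -
  obtain g u w where g: "g = u * a + w * b" "g dvd a" "g dvd b"
    by (rule ex_common_divisor_in_ideal)
  then obtain x y where xy: "a = g * x" "b = g * y"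
    by (elim dvdE)
  then have "g \<noteq> 0"
    using assms by auto
  have "g * (u * x + w * y) = u * (g * x) + w * (g * y)"
    by (simp add: algebra_simps)
  also have "\<dots> = g * 1"
    by (simp only: xy [symmetric]) (simp add: g(1))
  finally have "u * x + w * y = 1"
    using \<open>g \<noteq> 0\<close> mult_left_cancel by blast
  with xy \<open>g \<noteq> 0\<close> show ?thesis
    using that by blast
qed

lemma coprime_dvd_mult_cancel:
  fixes a b c :: "'a::euclidean_ring"
  assumes "coprime a b" "a dvd b * c"
  shows "a dvd c"
proof -
  obtain u w where "u * a + w * b = 1"
    using assms(1) by (rule coprime_imp_bezout)
  then have "c = (u * c) * a + w * (b * c)"
    by (metis distrib_right mult.commute mult.left_commute mult_1_left)
  then show ?thesis
    using assms(2) by (metis dvd_add dvd_mult dvd_triv_right)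
qed

lemma coprime_mult_rightI:
  fixes a b c :: "'a::euclidean_ring"
  assumes "coprime a b" "coprime a c"
  shows "coprime a (b * c)"
proof (rule coprimeI)
  fix k assume k: "k dvd a" "k dvd b * c"
  have "coprime k b"
    using assms(1) k(1) by (rule coprime_divisors [OF _ dvd_refl, rotated])
  then have "k dvd c"
    using k(2) by (rule coprime_dvd_mult_cancel)
  then show "is_unit k"
    using assms(2) k(1) coprime_common_divisor by blast
qed

lemma pinv_const [simp]: "pinv [:c:] = [:c:]"
  by (simp add: pinv_def)

lemma pinv_0 [simp]: "pinv 0 = 0"
  by (simp add: pinv_def)

lemma pinv_1 [simp]: "pinv 1 = 1"
  by (simp add: pinv_def pcompose_1)

lemma pinv_add [simp]: "pinv (p + q) = pinv p + pinv q"
  by (simp add: pinv_def pcompose_add)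

lemma pinv_diff [simp]: "pinv (p - q) = pinv p - pinv q"
  by (simp add: pinv_def pcompose_diff)

lemma pinv_uminus [simp]: "pinv (- p) = - pinv p"
  by (simp add: pinv_def pcompose_uminus)

lemma pinv_mult [simp]: "pinv (p * q) = pinv p * pinv q"
  by (simp add: pinv_def pcompose_mult)

lemma pinv_smult [simp]: "pinv (smult c p) = smult c (pinv p)"
  by (simp add: pinv_def pcompose_smult)

lemma pinv_of_int [simp]: "pinv (of_int k) = of_int k"
  by (simp add: of_int_poly)

lemma pinv_sum [simp]: "pinv (\<Sum>i\<in>I. f i) = (\<Sum>i\<in>I. pinv (f i))"
  by (simp add: pinv_def pcompose_sum)

lemma pinv_prod [simp]: "pinv (\<Prod>i\<in>I. f i) = (\<Prod>i\<in>I. pinv (f i))"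
  by (simp add: pinv_def pcompose_prod)

lemma pinv_X [simp]: "pinv [:0, 1:] = - [:0, 1:]"
  by (simp add: pinv_def pcompose_pCons)

lemma pinv_linear [simp]: "pinv [:a, b:] = [:a, - b:]"
  by (simp add: pinv_def pcompose_pCons)

lemma pinv_quadratic [simp]: "pinv [:a, b, c:] = [:a, - b, c:]"
  by (simp add: pinv_def pcompose_pCons algebra_simps)

lemma poly_pinv [simp]: "poly (pinv p) x = poly p (- x)"
  by (simp add: pinv_def poly_pcompose)

lemma pinv_pinv [simp]: "pinv (pinv p) = p"
  by (simp add: pinv_def pcompose_assoc [symmetric] pcompose_pCons)

lemma pinv_eq_iff [simp]: "pinv p = pinv q \<longleftrightarrow> p = q"
  by (metis pinv_pinv)

lemma pinv_eq_0_iff [simp]: "pinv p = 0 \<longleftrightarrow> p = 0"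
  using pinv_eq_iff [of p 0] by simp

lemma pinv_dvd_pinv_iff [simp]: "pinv p dvd pinv q \<longleftrightarrow> p dvd q"
  by (metis dvd_def pinv_mult pinv_pinv)

lemma is_unit_pinv_iff [simp]: "is_unit (pinv p) \<longleftrightarrow> is_unit p"
  using pinv_dvd_pinv_iff [of p 1] by simp

lemma coprime_pinv_iff [simp]: "coprime (pinv p) (pinv q) \<longleftrightarrow> coprime p q"
  unfolding coprime_def by (metis pinv_dvd_pinv_iff is_unit_pinv_iff pinv_pinv)

lemma infinite_UNIV_alg_closed: "infinite (UNIV :: 'a::alg_closed_field set)"
proof
  assume fin: "finite (UNIV :: 'a set)"
  define p :: "'a poly" where "p = (\<Prod>a\<in>UNIV. [:- a, 1:]) + 1"
  have "degree p = card (UNIV :: 'a set)"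
    unfolding p_def using fin by (simp add: degree_add_eq_left degree_prod_eq_sum_degree card_gt_0_iff)
  then obtain x where "poly p x = 0"
    using alg_closed_imp_poly_has_root fin by (metis card_gt_0_iff UNIV_not_empty)
  moreover have "poly (\<Prod>a\<in>UNIV. [:- a, 1:]) x = 0"
    unfolding poly_prod using fin by (intro prod_zero) auto
  ultimately show False
    by (simp add: p_def)
qed

lemma coprime_iff_no_common_root:
  fixes p q :: "'a::alg_closed_field poly"
  shows "coprime p q \<longleftrightarrow> (\<forall>r. poly p r = 0 \<longrightarrow> poly q r \<noteq> 0)"
proof
  assume "coprime p q"
  show "\<forall>r. poly p r = 0 \<longrightarrow> poly q r \<noteq> 0"
  proof (intro allI impI notI)
    fix r assume "poly p r = 0" "poly q r = 0"
    then have "is_unit [:- r, 1:]"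
      using \<open>coprime p q\<close> by (simp add: poly_eq_0_iff_dvd coprime_common_divisor)
    then show False
      by (simp add: is_unit_iff_degree)
  qed
next
  assume no_common_root: "\<forall>r. poly p r = 0 \<longrightarrow> poly q r \<noteq> 0"
  show "coprime p q"
  proof (rule coprimeI)
    fix c assume "c dvd p" "c dvd q"
    then have "poly c r \<noteq> 0" for r
      using no_common_root by (metis dvd_trans poly_eq_0_iff_dvd)
    then show "is_unit c"
      using alg_closed_imp_poly_has_root by (metis is_unit_iff_degree gr0I poly_0)
  qed
qed

section \<open>Polynomials fixed by the involution\<close>

lemma pinv_fixed_root_dvd:
  fixes e :: "'a::field poly"
  assumes two: "(2::'a) \<noteq> 0" and fixed: "pinv e = e" and root: "poly e r = 0"
  shows "[:- (r * r), 0, 1:] dvd e"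
proof (cases "r = 0")
  case False
  obtain q where q: "e = [:- r, 1:] * q"
    using root by (meson dvdE poly_eq_0_iff_dvd)
  have "poly e (- r) = 0"
    using root fixed by (metis poly_pinv)
  then have "(- r - r) * poly q (- r) = 0"
    unfolding q by simp
  moreover have "- r - r = - (2 * r)" and "2 * r \<noteq> 0"
    using two False by simp_all
  ultimately have "[:r, 1:] dvd q"
    by (simp add: dvd_iff_poly_eq_0)
  then have "[:- r, 1:] * [:r, 1:] dvd e"
    unfolding q by (rule mult_dvd_mono [OF dvd_refl])
  then show ?thesis
    by simp
next
  case True
  obtain q where q: "e = [:0, 1:] * q"
    using root True poly_eq_0_iff_dvd [of e 0] by (auto elim: dvdE)
  have "[:0, 1:] * - pinv q = [:0, 1:] * q"
    using fixed by (simp only: q pinv_mult pinv_X mult_minus_left mult_minus_right)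
  then have "pinv q = - q"
    by (metis minus_minus mult_cancel_left pCons_eq_0_iff zero_neq_one)
  then have "poly q 0 = - poly q 0"
    using poly_pinv [of q 0] by simp
  then have "poly q 0 + poly q 0 = 0"
    by (subst (asm) eq_neg_iff_add_eq_0)
  then have "2 * poly q 0 = 0"
    by (simp only: mult_2)
  then have "[:0, 1:] dvd q"
    using two by (simp add: dvd_iff_poly_eq_0)
  then have "[:0, 1:] * [:0, 1:] dvd e"
    unfolding q by (rule mult_dvd_mono [OF dvd_refl])
  then show ?thesis
    using True by simp
qed

lemma pinv_fixed_cancel:
  fixes q e :: "'a::idom poly"
  assumes "pinv q = q" "q \<noteq> 0" "pinv (q * e) = q * e"
  shows "pinv e = e"
proof -
  have "q * pinv e = pinv (q * e)"
    by (simp only: pinv_mult assms(1))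
  then have "q * pinv e = q * e"
    by (simp only: assms(3))
  then show ?thesis
    using assms(2) by simp
qed

lemma pinv_fixed_eq_norm:
  fixes e :: "'a::alg_closed_field poly"
  assumes two: "(2::'a) \<noteq> 0" and "pinv e = e"
  shows "\<exists>h. e = h * pinv h"
  using \<open>pinv e = e\<close>
proof (induction "degree e" arbitrary: e rule: less_induct)
  case (less e)
  show ?case
  proof (cases "degree e = 0")
    case True
    then obtain c where "e = [:c:]"
      by (elim degree_eq_zeroE)
    moreover obtain s where "s ^ 2 = c"
      using nth_root_exists [of 2 c] by auto
    ultimately show ?thesis
      by (intro exI [of _ "[:s:]"]) (simp add: power2_eq_square)
  next
    case False
    then obtain r where "poly e r = 0"
      using alg_closed_imp_poly_has_root by blast
    then have "[:- (r * r), 0, 1:] dvd e"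
      by (rule pinv_fixed_root_dvd [OF two less.prems])
    then obtain e' where e': "e = [:- (r * r), 0, 1:] * e'"
      by (elim dvdE)
    have "e' \<noteq> 0"
      using False by (auto simp: e')
    then have "degree e = 2 + degree e'"
      unfolding e' by (subst degree_mult_eq) simp_all
    then have "degree e' < degree e"
      by simp
    moreover have "pinv e' = e'"
      using less.prems unfolding e' by (rule pinv_fixed_cancel [rotated 2]) simp_all
    ultimately obtain h' where h': "e' = h' * pinv h'"
      using less.hyps by blast
    obtain i :: 'a where i: "i ^ 2 = - 1"
      using nth_root_exists [of 2 "- 1"] by auto
    define H where "H = [:- (i * r), i:]"
    have "H * pinv H = [:(i * i) * (r * r), 0, - (i * i):]"
      by (simp add: H_def algebra_simps)
    also have "\<dots> = [:- (r * r), 0, 1:]"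
      using i by (simp add: power2_eq_square)
    finally have norm_H: "H * pinv H = [:- (r * r), 0, 1:]" .
    have "(H * h') * pinv (H * h') = (H * pinv H) * (h' * pinv h')"
      by (simp add: mult_ac)
    also have "\<dots> = e"
      by (simp only: norm_H e' h')
    finally show ?thesis
      by metis
  qed
qed

lemma pinv_fixed_in_ideal_eq_trace:
  fixes c e u w :: "'a::field poly"
  assumes two: "(2::'a) \<noteq> 0" and fixed: "pinv e = e" and e: "e = u * c + w * pinv c"
  shows "\<exists>x. e = pinv x * c + x * pinv c"
proof -
  define x where "x = smult (inverse 2) (pinv u + w)"
  have "pinv x * c + x * pinv c = smult (inverse 2) (e + pinv e)"
    by (simp add: x_def e algebra_simps smult_add_right)
  also have "\<dots> = smult (inverse 2) (smult 2 e)"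
    using fixed smult_add_left [of 1 1 e] by simp
  also have "\<dots> = e"
    using two by simp
  finally show ?thesis
    by metis
qed

lemma dvd_norm_minus_one:
  fixes M z :: "'a::comm_ring_1 poly"
  assumes fixed: "pinv M = M" and dvd: "M dvd z - 1"
  shows "M dvd z * pinv z - 1"
proof -
  have "M dvd pinv z - 1"
    using dvd fixed by (metis pinv_1 pinv_diff pinv_dvd_pinv_iff)
  then have "M dvd (z - 1) * (pinv z - 1) + (z - 1) + (pinv z - 1)"
    using dvd by (intro dvd_add dvd_mult2)
  moreover have "(z - 1) * (pinv z - 1) + (z - 1) + (pinv z - 1) = z * pinv z - 1"
    by (simp add: algebra_simps)
  ultimately show ?thesis
    by simp
qed

section \<open>The form \<open>b x\<^sup>* y + (b x\<^sup>* y)\<^sup>* + d y y\<^sup>*\<close>\<close>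

lemma ex_inverse_mod_not_pinv_fixed:
  fixes h M :: "'a::field poly"
  assumes two: "(2::'a) \<noteq> 0" and "M \<noteq> 0" "pinv M = M" "coprime h M"
  obtains y where "M dvd h * y - 1" "pinv y \<noteq> y"
proof -
  obtain y0 k where bezout: "y0 * h + k * M = 1"
    using assms(4) by (rule coprime_imp_bezout)
  have inverse: "M dvd h * (y0 + z * M) - 1" for z
  proof -
    have "h * (y0 + z * M) - 1 = (y0 * h + k * M - 1) + M * (h * z - k)"
      by (simp add: algebra_simps)
    then show ?thesis
      using bezout by simp
  qed
  show ?thesis
  proof (cases "pinv y0 = y0")
    case False
    then show ?thesis
      using that inverse [of 0] by simp
  next
    case True
    define N where "N = [:0, 1:] * M"
    have "N \<noteq> 0"
      using \<open>M \<noteq> 0\<close> by (simp add: N_def)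
    then have "2 * N \<noteq> 0"
      using two by (simp add: numeral_poly)
    moreover have "2 * N = (y0 + N) - (y0 - N)"
      by (simp only: mult_2) (simp add: algebra_simps)
    ultimately have "y0 - N \<noteq> y0 + N"
      by (metis right_minus_eq)
    moreover have "pinv (y0 + N) = y0 - N"
      unfolding N_def by (simp only: pinv_add pinv_mult pinv_X True \<open>pinv M = M\<close>) simp
    ultimately have "pinv (y0 + N) \<noteq> y0 + N"
      by simp
    then show ?thesis
      using that inverse [of "[:0, 1:]"] unfolding N_def by blast
  qed
qed

lemma ex_shift_coprime:
  fixes M y0 c :: "'a::alg_closed_field poly"
  assumes fixed: "pinv M = M" and "coprime M y0" "pinv y0 \<noteq> y0" "c \<noteq> 0"
  obtains \<mu> where "coprime (y0 + smult \<mu> M) c"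
    and "coprime (y0 + smult \<mu> M) (pinv (y0 + smult \<mu> M))"
proof -
  define Z where "Z = {r. poly (c * (y0 - pinv y0)) r = 0}"
  have "finite Z"
    unfolding Z_def using assms(3,4) by (intro poly_roots_finite) simp
  \<comment> \<open>each \<open>r \<in> Z\<close> is a root of \<open>y0 + \<mu> M\<close> for at most one \<open>\<mu>\<close>\<close>
  then obtain \<mu> where \<mu>: "\<mu> \<notin> (\<lambda>r. - poly y0 r / poly M r) ` Z"
    using ex_new_if_finite [OF infinite_UNIV_alg_closed] by blast
  define y where "y = y0 + smult \<mu> M"
  have root_y: "r \<notin> Z" if "poly y r = 0" for r
  proof -
    have "poly M r \<noteq> 0"
      using that \<open>coprime M y0\<close> by (auto simp: y_def coprime_iff_no_common_root)
    then have "\<mu> = - poly y0 r / poly M r"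
      using that by (simp add: y_def field_simps add_eq_0_iff)
    then show ?thesis
      using \<mu> by blast
  qed
  have "coprime y c"
    unfolding coprime_iff_no_common_root using root_y unfolding Z_def by auto
  moreover have "coprime y (pinv y)"
    unfolding coprime_iff_no_common_root
  proof (intro allI impI notI)
    fix r assume "poly y r = 0" "poly (pinv y) r = 0"
    moreover have "poly M (- r) = poly M r"
      using fixed by (metis poly_pinv)
    ultimately have "poly (y0 - pinv y0) r = 0"
      by (simp add: y_def) (metis add_right_cancel)
    then show False
      using root_y [OF \<open>poly y r = 0\<close>] unfolding Z_def by simp
  qed
  ultimately show ?thesis
    using that by (simp add: y_def)
qed

lemma ex_norm_one_mod:
  fixes d M c :: "'a::alg_closed_field poly"
  assumes two: "(2::'a) \<noteq> 0"
    and "pinv d = d" "pinv M = M" "M \<noteq> 0" "coprime d M" "c \<noteq> 0"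
  obtains y where "M dvd d * y * pinv y - 1" "coprime y c" "coprime y (pinv y)"
proof -
  obtain h where d: "d = h * pinv h"
    using pinv_fixed_eq_norm [OF two \<open>pinv d = d\<close>] by blast
  have "coprime h M"
    using \<open>coprime d M\<close> unfolding d by (rule coprime_divisors [OF dvd_triv_left dvd_refl])
  then obtain y0 where y0: "M dvd h * y0 - 1" "pinv y0 \<noteq> y0"
    using ex_inverse_mod_not_pinv_fixed [OF two \<open>M \<noteq> 0\<close> \<open>pinv M = M\<close>] by blast
  have "coprime M y0"
  proof (rule coprimeI)
    fix k assume "k dvd M" "k dvd y0"
    then have "k dvd h * y0 - (h * y0 - 1)"
      using y0(1) by (meson dvd_diff dvd_mult dvd_trans)
    then show "is_unit k"
      by simp
  qed
  then obtain \<mu> where coprime: "coprime (y0 + smult \<mu> M) c"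
    "coprime (y0 + smult \<mu> M) (pinv (y0 + smult \<mu> M))"
    using ex_shift_coprime [OF \<open>pinv M = M\<close> _ y0(2) \<open>c \<noteq> 0\<close>] by blast
  define y where "y = y0 + smult \<mu> M"
  have "h * y - 1 = (h * y0 - 1) + M * smult \<mu> h"
    by (simp add: y_def algebra_simps)
  then have "M dvd h * y - 1"
    using y0(1) by (metis dvd_add dvd_triv_left)
  then have "M dvd (h * y) * pinv (h * y) - 1"
    using \<open>pinv M = M\<close> by (rule dvd_norm_minus_one [rotated])
  then have "M dvd d * y * pinv y - 1"
    by (simp add: d mult_ac)
  then show ?thesis
    using that coprime unfolding y_def by blast
qed

lemma trace_form_represents_one_at:
  fixes b d y :: "'a::field poly"
  assumes two: "(2::'a) \<noteq> 0" and "pinv d = d"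
    and coprime: "coprime y (pinv b)" "coprime y (pinv y)"
    and common_divisor: "\<And>k. k dvd b \<Longrightarrow> k dvd pinv b \<Longrightarrow> k dvd d * y * pinv y - 1"
  shows "\<exists>x. pinv x * b * y + pinv y * pinv b * x + pinv y * d * y = 1"
proof -
  define c where "c = b * y"
  obtain G U W where G: "G = U * c + W * pinv c" "G dvd c" "G dvd pinv c"
    by (rule ex_common_divisor_in_ideal)
  have "coprime y (pinv c)"
    using coprime by (simp add: c_def coprime_mult_rightI)
  then have "coprime G y" "coprime G (pinv y)"
    using G by (metis coprime_commute coprime_divisors dvd_refl coprime_pinv_iff pinv_pinv)+
  moreover have "G dvd y * b" "G dvd pinv y * pinv b"
    using G unfolding c_def pinv_mult by (simp_all only: mult.commute)
  ultimately have "G dvd b" "G dvd pinv b"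
    by (blast intro: coprime_dvd_mult_cancel)+
  then have "G dvd 1 - d * y * pinv y"
    using common_divisor by (simp add: dvd_diff_commute)
  then obtain E where "1 - d * y * pinv y = G * E"
    by (elim dvdE)
  then have "1 - d * y * pinv y = (E * U) * c + (E * W) * pinv c"
    by (simp add: G(1) algebra_simps)
  moreover have "pinv (1 - d * y * pinv y) = 1 - d * y * pinv y"
    using \<open>pinv d = d\<close> by (simp add: mult_ac)
  ultimately obtain x where "1 - d * y * pinv y = pinv x * c + x * pinv c"
    using pinv_fixed_in_ideal_eq_trace [OF two] by metis
  then have "pinv x * b * y + pinv y * pinv b * x + pinv y * d * y = 1"
    by (simp add: c_def algebra_simps)
  then show ?thesis
    by blast
qed

lemma trace_form_represents_one:
  fixes b d :: "'a::alg_closed_field poly"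
  assumes two: "(2::'a) \<noteq> 0" and "b \<noteq> 0" "pinv d = d"
    and unit_ideal: "u * b + w * pinv b + z * d = 1"
  shows "\<exists>x y. pinv x * b * y + pinv y * pinv b * x + pinv y * d * y = 1"
proof -
  obtain g u0 w0 where g: "g = u0 * b + w0 * pinv b" "g dvd b" "g dvd pinv b"
    by (rule ex_common_divisor_in_ideal)
  have coprime_d: "coprime d k" if "k dvd b" "k dvd pinv b" for k
  proof (rule coprimeI)
    fix l assume "l dvd d" "l dvd k"
    then have "l dvd u * b + w * pinv b + z * d"
      using that by (meson dvd_add dvd_mult dvd_trans)
    then show "is_unit l"
      by (simp add: unit_ideal)
  qed
  have "pinv g dvd b" "pinv g dvd pinv b"
    using g by (metis pinv_dvd_pinv_iff pinv_pinv)+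
  then have "coprime d (g * pinv g)"
    using g by (intro coprime_mult_rightI coprime_d)
  moreover have "g \<noteq> 0"
    using g \<open>b \<noteq> 0\<close> by auto
  ultimately obtain y where y: "g * pinv g dvd d * y * pinv y - 1"
      "coprime y (pinv b)" "coprime y (pinv y)"
    using ex_norm_one_mod [OF two \<open>pinv d = d\<close>, of "g * pinv g" "pinv b"] \<open>b \<noteq> 0\<close>
    by (auto simp: mult.commute)
  have "k dvd d * y * pinv y - 1" if "k dvd b" "k dvd pinv b" for k
  proof -
    have "k dvd g"
      using that by (simp add: g(1))
    also have "g dvd d * y * pinv y - 1"
      using y(1) by (rule dvd_mult_left)
    finally show ?thesis .
  qed
  then show ?thesis
    using trace_form_represents_one_at [OF two \<open>pinv d = d\<close> y(2,3)] by blast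
qed

section \<open>Congruence of hermitian matrices\<close>

lemma cstar_nth [simp]: "cstar A $ i $ j = pinv (A $ j $ i)"
  by (simp add: cstar_def)

lemma cstar_cstar [simp]: "cstar (cstar A) = A"
  by (simp add: vec_eq_iff)

lemma cstar_mat_1 [simp]: "cstar (mat 1) = mat 1"
  by (simp add: vec_eq_iff mat_def)

lemma cstar_matrix_mult: "cstar (A ** B) = cstar B ** cstar A"
  by (simp add: vec_eq_iff matrix_matrix_mult_def mult.commute)

lemma det_cstar: "det (cstar A) = pinv (det A)"
proof -
  have "cstar A = transpose (\<chi> i j. pinv (A $ i $ j))"
    by (simp add: vec_eq_iff transpose_def)
  then have "det (cstar A) = det (\<chi> i j. pinv (A $ i $ j))"
    by (simp only: det_transpose)
  also have "\<dots> = pinv (det A)"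
    by (simp add: det_def)
  finally show ?thesis .
qed

lemma hermitian_nth: "cstar A = A \<Longrightarrow> pinv (A $ i $ j) = A $ j $ i"
  by (metis cstar_nth)

lemma hermitian_congruence: "cstar A = A \<Longrightarrow> cstar (cstar S ** A ** S) = cstar S ** A ** S"
  by (simp add: cstar_matrix_mult matrix_mul_assoc)

lemma det_congruence: "det S = 1 \<Longrightarrow> det (cstar S ** A ** S) = det A"
  by (simp add: det_mul det_cstar)

lemma gcd_mat_one_iff_trace: "gcd_mat_one A \<longleftrightarrow> (\<exists>C. trace (C ** A) = 1)"
proof -
  have sum_eq_trace: "(\<Sum>i\<in>UNIV. \<Sum>j\<in>UNIV. C $ j $ i * A $ i $ j) = trace (C ** A)" for C
    by (simp add: trace_def matrix_matrix_mult_def) (rule sum.swap)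
  show ?thesis
  proof
    assume "gcd_mat_one A"
    then obtain c where "(\<Sum>i\<in>UNIV. \<Sum>j\<in>UNIV. c i j * A $ i $ j) = 1"
      unfolding gcd_mat_one_def by blast
    then have "trace ((\<chi> j i. c i j) ** A) = 1"
      by (simp add: sum_eq_trace [symmetric])
    then show "\<exists>C. trace (C ** A) = 1" ..
  next
    assume "\<exists>C. trace (C ** A) = 1"
    then obtain C where "(\<Sum>i\<in>UNIV. \<Sum>j\<in>UNIV. C $ j $ i * A $ i $ j) = 1"
      unfolding sum_eq_trace by blast
    then show "gcd_mat_one A"
      unfolding gcd_mat_one_def by (intro exI [of _ "\<lambda>i j. C $ j $ i"])
  qed
qed

lemma gcd_mat_one_congruence:
  assumes "invertible S" "gcd_mat_one A"
  shows "gcd_mat_one (cstar S ** A ** S)"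
proof -
  obtain T where T: "S ** T = mat 1"
    using assms(1) unfolding invertible_def by blast
  obtain C where "trace (C ** A) = 1"
    using assms(2) unfolding gcd_mat_one_iff_trace by blast
  also have "A = cstar (S ** T) ** A ** (S ** T)"
    by (simp add: T)
  also have "\<dots> = cstar T ** (cstar S ** A ** S) ** T"
    by (simp add: cstar_matrix_mult matrix_mul_assoc)
  also have "trace (C ** (cstar T ** (cstar S ** A ** S) ** T))
      = trace ((T ** C ** cstar T) ** (cstar S ** A ** S))"
    by (metis matrix_mul_assoc trace_mul_sym)
  finally show ?thesis
    unfolding gcd_mat_one_iff_trace by blast
qed

lemma matrix_mult_2_nth [simp]:
  "((A :: 'b::semiring_1^2^2) ** B) $ i $ j = A $ i $ 1 * B $ 1 $ j + A $ i $ 2 * B $ 2 $ j"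
  by (simp add: matrix_matrix_mult_def sum_2)

lemma mat_2_eq_iff:
  "(A :: 'b^2^2) = B \<longleftrightarrow>
    A $ 1 $ 1 = B $ 1 $ 1 \<and> A $ 1 $ 2 = B $ 1 $ 2 \<and> A $ 2 $ 1 = B $ 2 $ 1 \<and> A $ 2 $ 2 = B $ 2 $ 2"
  by (auto simp: vec_eq_iff forall_2)

lemma invertible_if_det_eq_1:
  fixes S :: "'b::comm_ring_1^2^2"
  assumes "det S = 1"
  shows "invertible S"
proof -
  define T :: "'b^2^2" where "T = vector [vector [S $ 2 $ 2, - S $ 1 $ 2], vector [- S $ 2 $ 1, S $ 1 $ 1]]"
  have "S ** T = mat 1" "T ** S = mat 1"
    using assms by (simp_all add: mat_2_eq_iff T_def mat_def det_2 algebra_simps)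
  then show ?thesis
    unfolding invertible_def by blast
qed

definition herm_form :: "'a::comm_ring_1 poly^2^2 \<Rightarrow> 'a poly \<Rightarrow> 'a poly \<Rightarrow> 'a poly" where
  "herm_form A x y =
    pinv x * A $ 1 $ 1 * x + pinv x * A $ 1 $ 2 * y + pinv y * A $ 2 $ 1 * x + pinv y * A $ 2 $ 2 * y"

lemma congruence_1_1: "(cstar S ** A ** S) $ 1 $ 1 = herm_form A (S $ 1 $ 1) (S $ 2 $ 1)"
  by (simp add: herm_form_def algebra_simps)

lemma herm_form_mult: "herm_form A (k * x) (k * y) = pinv k * k * herm_form A x y"
  by (simp add: herm_form_def algebra_simps)

lemma ex_congruence_corner_0:
  fixes A :: "'a::alg_closed_field poly^2^2"
  assumes two: "(2::'a) \<noteq> 0" and herm: "cstar A = A"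
  obtains S where "det S = 1" "(cstar S ** A ** S) $ 1 $ 1 = 0"
proof (cases "A $ 1 $ 1 = 0")
  case True
  then show ?thesis
    using that [of "mat 1"] by simp
next
  case False
  define a b d where "a = A $ 1 $ 1" and "b = A $ 1 $ 2" and "d = A $ 2 $ 2"
  have entries: "A $ 2 $ 1 = pinv b" "pinv a = a" "pinv d = d"
    using hermitian_nth [OF herm] by (simp_all add: a_def b_def d_def)
  have det_A: "det A = a * d - b * pinv b"
    by (simp add: det_2 entries a_def b_def d_def)
  then have "pinv (- det A) = - det A"
    by (simp add: entries mult.commute)
  then obtain h where h: "- det A = h * pinv h"
    using pinv_fixed_eq_norm [OF two] by blast
  have "herm_form A (h - b) a = a * (h * pinv h + det A)"
    by (simp add: herm_form_def det_A entries a_def [symmetric] b_def [symmetric] d_def [symmetric]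
        algebra_simps)
  then have isotropic: "herm_form A (h - b) a = 0"
    by (simp add: h [symmetric])
  have "a \<noteq> 0"
    using False by (simp add: a_def)
  then obtain G x y u w where xy: "h - b = G * x" "a = G * y" and "G \<noteq> 0"
    and bezout: "u * x + w * y = 1"
    by (rule ex_common_divisor_coprime_quotients)
  have "pinv G * G * herm_form A x y = 0"
    using isotropic by (simp add: xy herm_form_mult)
  then have "herm_form A x y = 0"
    using \<open>G \<noteq> 0\<close> by simp
  define S :: "'a poly^2^2" where "S = vector [vector [x, - w], vector [y, u]]"
  have "(cstar S ** A ** S) $ 1 $ 1 = 0"
    unfolding congruence_1_1 using \<open>herm_form A x y = 0\<close> by (simp add: S_def)
  moreover have "det S = 1"
    using bezout by (simp add: S_def det_2 algebra_simps)
  ultimately show ?thesis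
    using that by blast
qed

lemma ex_herm_form_eq_1_if_corner_0:
  fixes A :: "'a::alg_closed_field poly^2^2"
  assumes two: "(2::'a) \<noteq> 0" and herm: "cstar A = A"
    and "det A \<noteq> 0" "gcd_mat_one A" "A $ 1 $ 1 = 0"
  obtains x y where "herm_form A x y = 1"
proof -
  have entries: "A $ 2 $ 1 = pinv (A $ 1 $ 2)" "pinv (A $ 2 $ 2) = A $ 2 $ 2"
    using hermitian_nth [OF herm] by simp_all
  obtain c where "(\<Sum>i\<in>UNIV. \<Sum>j\<in>UNIV. c i j * A $ i $ j) = 1"
    using \<open>gcd_mat_one A\<close> unfolding gcd_mat_one_def by blast
  then have "c 1 2 * A $ 1 $ 2 + c 2 1 * pinv (A $ 1 $ 2) + c 2 2 * A $ 2 $ 2 = 1"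
    using \<open>A $ 1 $ 1 = 0\<close> by (simp add: sum_2 entries add.assoc)
  moreover have "A $ 1 $ 2 \<noteq> 0"
    using \<open>det A \<noteq> 0\<close> \<open>A $ 1 $ 1 = 0\<close> by (auto simp: det_2)
  ultimately obtain x y where
    "pinv x * A $ 1 $ 2 * y + pinv y * pinv (A $ 1 $ 2) * x + pinv y * A $ 2 $ 2 * y = 1"
    using trace_form_represents_one [OF two _ entries(2)] by blast
  then have "herm_form A x y = 1"
    using \<open>A $ 1 $ 1 = 0\<close> by (simp add: herm_form_def entries)
  then show ?thesis
    using that by blast
qed

lemma ex_congruence_diag_if_herm_form_eq_1:
  fixes A :: "'a::comm_ring_1 poly^2^2"
  assumes herm: "cstar A = A" and one: "herm_form A x y = 1"
  obtains S where "det S = 1"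
    and "cstar S ** A ** S = (\<chi> i j. if i = j then (if i = 1 then 1 else det A) else 0)"
proof -
  have entries: "A $ 2 $ 1 = pinv (A $ 1 $ 2)" "pinv (A $ 1 $ 1) = A $ 1 $ 1"
      "pinv (A $ 2 $ 2) = A $ 2 $ 2"
    using hermitian_nth [OF herm] by simp_all
  define P where "P = A $ 1 $ 1 * x + A $ 1 $ 2 * y"
  define R where "R = A $ 2 $ 1 * x + A $ 2 $ 2 * y"
  have "pinv x * P + pinv y * R = 1"
    using one by (simp add: herm_form_def P_def R_def algebra_simps)
  then have "x * pinv P + y * pinv R = 1"
    by (metis pinv_1 pinv_add pinv_mult pinv_pinv)
  \<comment> \<open>\<open>(P, R) = A (x, y)\<close>, so the second column of \<open>S\<close> is \<open>A\<close>-orthogonal to the first\<close>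
  moreover define S :: "'a poly^2^2" where "S = vector [vector [x, - pinv R], vector [y, pinv P]]"
  ultimately have det_S: "det S = 1"
    by (simp add: S_def det_2 algebra_simps)
  define B where "B = cstar S ** A ** S"
  have B11: "B $ 1 $ 1 = 1"
    unfolding B_def congruence_1_1 using one by (simp add: S_def)
  have B12: "B $ 1 $ 2 = 0"
    by (simp add: B_def S_def P_def R_def entries algebra_simps)
  have "cstar B = B"
    unfolding B_def using herm by (rule hermitian_congruence)
  then have B21: "B $ 2 $ 1 = 0"
    using hermitian_nth [of B 1 2] B12 by simp
  have "det B = det A"
    unfolding B_def using det_S by (rule det_congruence)
  then have "B $ 2 $ 2 = det A"
    by (simp add: det_2 B11 B12 B21)
  with B11 B12 B21 have "B = (\<chi> i j. if i = j then (if i = 1 then 1 else det A) else 0)"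
    by (simp add: mat_2_eq_iff)
  then show ?thesis
    using that det_S by (simp add: B_def)
qed

theorem proposition3p1:
  fixes A :: "'a::alg_closed_field poly ^ 2 ^ 2"
  assumes "(2::'a) \<noteq> 0"
    and "cstar A = A"
    and "det A \<noteq> 0"
    and "gcd_mat_one A"
  shows "\<exists>S :: 'a poly ^ 2 ^ 2. invertible S \<and>
           cstar S ** A ** S = (\<chi> i j. if i = j then (if i = 1 then 1 else det A) else 0)"
proof -
  obtain S0 where S0: "det S0 = 1" "(cstar S0 ** A ** S0) $ 1 $ 1 = 0"
    using ex_congruence_corner_0 [OF assms(1,2)] by blast
  define B where "B = cstar S0 ** A ** S0"
  have herm_B: "cstar B = B"
    unfolding B_def using assms(2) by (rule hermitian_congruence)
  have det_B: "det B = det A"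
    unfolding B_def using S0(1) by (rule det_congruence)
  have "gcd_mat_one B"
    unfolding B_def using invertible_if_det_eq_1 [OF S0(1)] assms(4) by (rule gcd_mat_one_congruence)
  moreover have "B $ 1 $ 1 = 0"
    unfolding B_def by (rule S0(2))
  ultimately obtain x y where "herm_form B x y = 1"
    using ex_herm_form_eq_1_if_corner_0 [OF assms(1) herm_B] assms(3) unfolding det_B by blast
  then obtain S1 where S1: "det S1 = 1"
    "cstar S1 ** B ** S1 = (\<chi> i j. if i = j then (if i = 1 then 1 else det A) else 0)"
    using ex_congruence_diag_if_herm_form_eq_1 [OF herm_B] unfolding det_B by blast
  have "cstar (S0 ** S1) ** A ** (S0 ** S1) = cstar S1 ** B ** S1"
    by (simp add: B_def cstar_matrix_mult matrix_mul_assoc)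
  moreover have "invertible (S0 ** S1)"
    using S0(1) S1(1) by (simp add: invertible_if_det_eq_1 det_mul)
  ultimately show ?thesis
    using S1(2) by auto
qed

end
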